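(* Let $\Theta\subseteq\mathbb{R}^p$ be convex and bounded with diameter $R\triangleq\max_{\theta_1,\theta_2\in\Theta}\|\theta_1-\theta_2\|_2$, and let $f:\mathbb{R}^p\to\mathbb{R}$ be continuous and convex with minimum $f^\star$ over $\Theta$. Consider the following scheme: given $\theta_0\in\Theta$, for $n\ge1$, let $g_n$ be a majorant function in $\mathcal{S}_{L,L}(f,\theta_{n-1})$; compute $\nu_n\in\operatorname{arg\,min}_{\theta\in\Theta}\big[g_n(\theta)-\frac{L}{2}\|\theta-\theta_{n-1}\|_2^2\big]$; compute $\alpha^\star\in\operatorname{arg\,min}_{\alpha\in[0,1]}g_n(\alpha\nu_n+(1-\alpha)\theta_{n-1})$; set $\theta_n\triangleq\alpha^\star\nu_n+(1-\alpha^\star)\theta_{n-1}$. Then $(f(\theta_n))_{n\ge0}$ converges to $f^\star$ and $$f(\theta_n)-f^\star\le\frac{2LR^2}{n+2}\quad\text{for all }n\ge1.$$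
   Context: First-order surrogates: $g:\mathbb{R}^p\to\mathbb{R}$ belongs to $\mathcal{S}_L(f,\kappa)$ if (a) $g(\theta')\ge f(\theta')$ for all $\theta'\in\operatorname{arg\,min}_{\theta\in\Theta}g(\theta)$, and (b) $h\triangleq g-f$ is differentiable with $L$-Lipschitz gradient, $h(\kappa)=0$, $\nabla h(\kappa)=0$; $\mathcal{S}_{L,\rho}(f,\kappa)$ is the subset of $\rho$-strongly convex elements. A majorant function satisfies $g\ge f$ everywhere. The minimizers are assumed to exist. *)

theory Defs
  imports "HOL-Analysis.Analysis"
begin

definition strongly_convex_on :: "real \<Rightarrow> 'a::real_inner set \<Rightarrow> ('a \<Rightarrow> real) \<Rightarrow> bool" where
  "strongly_convex_on \<rho> S g \<longleftrightarrow> convex_on S (\<lambda>x. g x - \<rho> / 2 * (norm x)\<^sup>2)"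

definition first_order_surrogate ::
  "'a::euclidean_space set \<Rightarrow> real \<Rightarrow> ('a \<Rightarrow> real) \<Rightarrow> 'a \<Rightarrow> ('a \<Rightarrow> real) \<Rightarrow> bool" where
  "first_order_surrogate \<Theta> L f \<kappa> g \<longleftrightarrow>
     (\<forall>\<theta>'. is_arg_min g (\<lambda>\<theta>. \<theta> \<in> \<Theta>) \<theta>' \<longrightarrow> f \<theta>' \<le> g \<theta>') \<and>
     (\<exists>G :: 'a \<Rightarrow> 'a.
        (\<forall>x. ((\<lambda>y. g y - f y) has_derivative (\<lambda>v. G x \<bullet> v)) (at x)) \<and>
        L-lipschitz_on UNIV G \<and>
        g \<kappa> - f \<kappa> = 0 \<and> G \<kappa> = 0)"

definition strong_first_order_surrogate ::
  "'a::euclidean_space set \<Rightarrow> real \<Rightarrow> real \<Rightarrow> ('a \<Rightarrow> real) \<Rightarrow> 'a \<Rightarrow> ('a \<Rightarrow> real) \<Rightarrow> bool" where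
  "strong_first_order_surrogate \<Theta> L \<rho> f \<kappa> g \<longleftrightarrow>
     first_order_surrogate \<Theta> L f \<kappa> g \<and> strongly_convex_on \<rho> UNIV g"

definition majorant :: "('a \<Rightarrow> real) \<Rightarrow> ('a \<Rightarrow> real) \<Rightarrow> bool" where
  "majorant f g \<longleftrightarrow> (\<forall>x. f x \<le> g x)"

end

theory Submission
  imports Defs "HOL-Real_Asymp.Real_Asymp"
begin

text \<open>
  Since \<open>g\<^sub>n - f\<close> vanishes to first order at \<open>\<theta>\<^sub>n\<^sub>-\<^sub>1\<close> and has an \<open>L\<close>-Lipschitz gradient,
  \<open>g\<^sub>n \<le> f + L/2 \<parallel>\<cdot> - \<theta>\<^sub>n\<^sub>-\<^sub>1\<parallel>\<^sup>2\<close>; hence \<open>g\<^sub>n(\<nu>\<^sub>n) - L/2 \<parallel>\<nu>\<^sub>n - \<theta>\<^sub>n\<^sub>-\<^sub>1\<parallel>\<^sup>2 \<le> f\<^sup>\<star>\<close>.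
  The \<open>L\<close>-strong convexity of \<open>g\<^sub>n\<close> along the segment from \<open>\<theta>\<^sub>n\<^sub>-\<^sub>1\<close> to \<open>\<nu>\<^sub>n\<close>, the
  majorization \<open>f \<le> g\<^sub>n\<close> and the line search then give, for every \<open>a \<in> [0,1]\<close>,
  \<open>f(\<theta>\<^sub>n) - f\<^sup>\<star> \<le> (1 - a)(f(\<theta>\<^sub>n\<^sub>-\<^sub>1) - f\<^sup>\<star>) + L R\<^sup>2 a\<^sup>2 / 2\<close>, exactly the Frank-Wolfe
  recurrence; choosing \<open>a = 2/(n+1)\<close> yields the \<open>2LR\<^sup>2/(n+2)\<close> rate by induction.
\<close>

lemma lipschitz_gradient_quadratic_upper_bound:
  fixes h :: "'a::euclidean_space \<Rightarrow> real" and G :: "'a \<Rightarrow> 'a"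
  assumes h_deriv: "\<forall>x. (h has_derivative (\<lambda>v. G x \<bullet> v)) (at x)"
    and lip: "L-lipschitz_on UNIV G" and h0: "h \<kappa> = 0" and G0: "G \<kappa> = 0"
  shows "h \<theta> \<le> L / 2 * (norm (\<theta> - \<kappa>))\<^sup>2"
proof -
  define d where "d = \<theta> - \<kappa>"
  define \<phi> where "\<phi> t = h (\<kappa> + t *\<^sub>R d) - L / 2 * t\<^sup>2 * (norm d)\<^sup>2" for t :: real
  have \<phi>_deriv: "DERIV \<phi> t :> (G (\<kappa> + t *\<^sub>R d) \<bullet> d - L * t * (norm d)\<^sup>2)" for t
  proof -
    have line: "((\<lambda>t. \<kappa> + t *\<^sub>R d) has_derivative (\<lambda>s. s *\<^sub>R d)) (at t)"
      by (auto intro!: derivative_eq_intros)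
    have "((\<lambda>t. h (\<kappa> + t *\<^sub>R d)) has_derivative (\<lambda>s. G (\<kappa> + t *\<^sub>R d) \<bullet> (s *\<^sub>R d))) (at t)"
      using has_derivative_compose[OF line h_deriv[rule_format]] by simp
    then have h_line: "((\<lambda>t. h (\<kappa> + t *\<^sub>R d)) has_real_derivative (G (\<kappa> + t *\<^sub>R d) \<bullet> d)) (at t)"
      unfolding has_field_derivative_def by (simp add: mult.commute[of _ "G (\<kappa> + t *\<^sub>R d) \<bullet> d"])
    show ?thesis unfolding \<phi>_def
      by (rule derivative_eq_intros h_line refl)+ (simp add: algebra_simps)
  qed
  have \<phi>_deriv_nonpos: "G (\<kappa> + t *\<^sub>R d) \<bullet> d - L * t * (norm d)\<^sup>2 \<le> 0" if "0 \<le> t" for t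
  proof -
    have "G (\<kappa> + t *\<^sub>R d) \<bullet> d = (G (\<kappa> + t *\<^sub>R d) - G \<kappa>) \<bullet> d" using G0 by simp
    also have "\<dots> \<le> norm (G (\<kappa> + t *\<^sub>R d) - G \<kappa>) * norm d" by (rule norm_cauchy_schwarz)
    also have "\<dots> \<le> L * norm (t *\<^sub>R d) * norm d"
      using lipschitz_onD[OF lip, of "\<kappa> + t *\<^sub>R d" \<kappa>] by (auto simp: dist_norm intro: mult_right_mono)
    also have "\<dots> = L * t * (norm d)\<^sup>2" using that by (simp add: power2_eq_square)
    finally show ?thesis by simp
  qed
  have "\<phi> 1 \<le> \<phi> 0"
  proof (rule DERIV_nonpos_imp_nonincreasing[of 0 1])
    fix t :: real
    assume "0 \<le> t" "t \<le> 1"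
    then show "\<exists>y. DERIV \<phi> t :> y \<and> y \<le> 0" using \<phi>_deriv \<phi>_deriv_nonpos by blast
  qed simp
  then show ?thesis using h0 by (simp add: \<phi>_def d_def)
qed

lemma norm_sq_convex_combination:
  fixes u v :: "'a::real_inner"
  shows "(norm (a *\<^sub>R u + (1 - a) *\<^sub>R v))\<^sup>2
         = a * (norm u)\<^sup>2 + (1 - a) * (norm v)\<^sup>2 - a * (1 - a) * (norm (u - v))\<^sup>2"
  by (simp add: power2_norm_eq_inner inner_simps algebra_simps)

lemma strongly_convex_onD:
  fixes g :: "'a::real_inner \<Rightarrow> real"
  assumes "strongly_convex_on \<rho> S g" "x \<in> S" "y \<in> S" "0 \<le> a" "a \<le> 1"
  shows "g (a *\<^sub>R x + (1 - a) *\<^sub>R y)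
         \<le> a * g x + (1 - a) * g y - \<rho> / 2 * a * (1 - a) * (norm (x - y))\<^sup>2"
proof -
  have "g (a *\<^sub>R x + (1 - a) *\<^sub>R y) - \<rho> / 2 * (norm (a *\<^sub>R x + (1 - a) *\<^sub>R y))\<^sup>2
        \<le> a * (g x - \<rho> / 2 * (norm x)\<^sup>2) + (1 - a) * (g y - \<rho> / 2 * (norm y)\<^sup>2)"
    using assms convex_onD[of S _ "1 - a" x y] unfolding strongly_convex_on_def by simp
  then show ?thesis unfolding norm_sq_convex_combination by (simp add: field_simps)
qed

lemma surrogate_step_bound:
  fixes \<Theta> :: "'a::euclidean_space set" and f g :: "'a \<Rightarrow> real"
  assumes bnd: "bounded \<Theta>" and \<kappa>: "\<kappa> \<in> \<Theta>" and \<theta>s: "\<theta>s \<in> \<Theta>"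
    and maj: "majorant f g"
    and surr: "strong_first_order_surrogate \<Theta> L L f \<kappa> g"
    and nu: "is_arg_min (\<lambda>x. g x - L / 2 * (norm (x - \<kappa>))\<^sup>2) (\<lambda>x. x \<in> \<Theta>) \<nu>"
    and alpha: "is_arg_min (\<lambda>a. g (a *\<^sub>R \<nu> + (1 - a) *\<^sub>R \<kappa>)) (\<lambda>a. a \<in> {0..1}) \<alpha>"
    and a: "0 \<le> a" "a \<le> 1"
  shows "f (\<alpha> *\<^sub>R \<nu> + (1 - \<alpha>) *\<^sub>R \<kappa>) - f \<theta>s
         \<le> (1 - a) * (f \<kappa> - f \<theta>s) + L * (diameter \<Theta>)\<^sup>2 / 2 * a\<^sup>2"
proof -
  obtain G where G_deriv: "\<forall>x. ((\<lambda>y. g y - f y) has_derivative (\<lambda>v. G x \<bullet> v)) (at x)"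
    and G_lip: "L-lipschitz_on UNIV G" and g\<kappa>: "g \<kappa> - f \<kappa> = 0" and "G \<kappa> = 0"
    and g_strong: "strongly_convex_on L UNIV g"
    using surr unfolding strong_first_order_surrogate_def first_order_surrogate_def by blast
  have L0: "L \<ge> 0" using G_lip by (rule lipschitz_on_nonneg)
  have g_upper: "g x - f x \<le> L / 2 * (norm (x - \<kappa>))\<^sup>2" for x
    by (rule lipschitz_gradient_quadratic_upper_bound) fact+
  have \<nu>: "\<nu> \<in> \<Theta>" using nu by (simp add: is_arg_min_def)
  have g\<nu>: "g \<nu> - L / 2 * (norm (\<nu> - \<kappa>))\<^sup>2 \<le> f \<theta>s"
  proof -
    have "g \<nu> - L / 2 * (norm (\<nu> - \<kappa>))\<^sup>2 \<le> g \<theta>s - L / 2 * (norm (\<theta>s - \<kappa>))\<^sup>2"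
      using nu \<theta>s by (auto simp: is_arg_min_linorder)
    then show ?thesis using g_upper[of \<theta>s] by simp
  qed
  have dist_\<nu>\<kappa>: "(norm (\<nu> - \<kappa>))\<^sup>2 \<le> (diameter \<Theta>)\<^sup>2"
    using diameter_bounded_bound[OF bnd \<nu> \<kappa>] by (simp add: dist_norm power_mono)
  have "f (\<alpha> *\<^sub>R \<nu> + (1 - \<alpha>) *\<^sub>R \<kappa>) \<le> g (\<alpha> *\<^sub>R \<nu> + (1 - \<alpha>) *\<^sub>R \<kappa>)"
    using maj by (simp add: majorant_def)
  also have "\<dots> \<le> g (a *\<^sub>R \<nu> + (1 - a) *\<^sub>R \<kappa>)"
    using alpha a by (auto simp: is_arg_min_linorder)
  also have "\<dots> \<le> a * g \<nu> + (1 - a) * g \<kappa> - L / 2 * a * (1 - a) * (norm (\<nu> - \<kappa>))\<^sup>2"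
    using strongly_convex_onD[OF g_strong _ _ a] by simp
  also have "\<dots> \<le> a * (f \<theta>s + L / 2 * (norm (\<nu> - \<kappa>))\<^sup>2) + (1 - a) * f \<kappa>
                   - L / 2 * a * (1 - a) * (norm (\<nu> - \<kappa>))\<^sup>2"
    using g\<nu> g\<kappa> a by (intro diff_right_mono add_mono mult_left_mono) auto
  also have "\<dots> = a * f \<theta>s + (1 - a) * f \<kappa> + L / 2 * a\<^sup>2 * (norm (\<nu> - \<kappa>))\<^sup>2"
    by (simp add: field_simps power2_eq_square)
  also have "\<dots> \<le> a * f \<theta>s + (1 - a) * f \<kappa> + L / 2 * a\<^sup>2 * (diameter \<Theta>)\<^sup>2"
    using dist_\<nu>\<kappa> L0 by (intro add_left_mono mult_left_mono) auto
  finally show ?thesis by (simp add: algebra_simps)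
qed

lemma frank_wolfe_recurrence_bound:
  fixes \<delta> :: "nat \<Rightarrow> real"
  assumes C: "C \<ge> 0"
    and rec: "\<And>n a. n \<ge> 1 \<Longrightarrow> 0 \<le> a \<Longrightarrow> a \<le> 1 \<Longrightarrow> \<delta> n \<le> (1 - a) * \<delta> (n - 1) + C / 2 * a\<^sup>2"
    and n: "n \<ge> 1"
  shows "\<delta> n \<le> 2 * C / (real n + 2)"
  using n
proof (induction n rule: dec_induct)
  case base
  have "\<delta> 1 \<le> C / 2" using rec[of 1 1] by simp
  then show ?case using C by simp
next
  case (step m)
  define a where "a = 2 / (real m + 2)"
  have a: "0 \<le> a" "a \<le> 1" using step.hyps by (auto simp: a_def)
  have "\<delta> (Suc m) \<le> (1 - a) * \<delta> m + C / 2 * a\<^sup>2" using rec[of "Suc m" a] a by simp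
  also have "\<dots> \<le> (1 - a) * (2 * C / (real m + 2)) + C / 2 * a\<^sup>2"
    using step.IH a by (intro add_right_mono mult_left_mono) auto
  also have "\<dots> = 2 * C * (real m + 1) / (real m + 2)\<^sup>2"
    by (simp add: a_def field_simps power2_eq_square, simp add: add_divide_distrib[symmetric])
  also have "\<dots> \<le> 2 * C / (real (Suc m) + 2)"
  proof -
    have "(real m + 1) * (real m + 3) \<le> (real m + 2)\<^sup>2"
      by (simp add: power2_eq_square algebra_simps)
    then have "2 * C * (real m + 1) * (real m + 3) \<le> 2 * C * (real m + 2)\<^sup>2"
      using C by (simp add: mult.assoc mult_left_mono)
    then show ?thesis by (simp add: field_simps)
  qed
  finally show ?case .
qed

lemma convex_iteration_mem:
  fixes x v :: "nat \<Rightarrow> 'a::real_vector"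
  assumes "convex S" and "x 0 \<in> S"
    and "\<And>n. n \<ge> 1 \<Longrightarrow> v n \<in> S \<and> t n \<in> {0..1}"
    and "\<And>n. n \<ge> 1 \<Longrightarrow> x n = t n *\<^sub>R v n + (1 - t n) *\<^sub>R x (n - 1)"
  shows "x n \<in> S"
proof (induction n)
  case (Suc m)
  then show ?case using assms convexD[OF assms(1), of "v (Suc m)" "x m" "t (Suc m)"] by force
qed (use assms in simp)

theorem proposition4p1:
  fixes \<Theta> :: "'a::euclidean_space set"
    and f :: "'a \<Rightarrow> real" and fstar L :: real
    and \<theta> \<nu> :: "nat \<Rightarrow> 'a" and g :: "nat \<Rightarrow> 'a \<Rightarrow> real" and \<alpha> :: "nat \<Rightarrow> real"
  assumes cvx: "convex \<Theta>" and bnd: "bounded \<Theta>"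
    and fcont: "continuous_on UNIV f" and fcvx: "convex_on UNIV f"
    and fmin: "\<exists>\<theta>s\<in>\<Theta>. f \<theta>s = fstar" and fmin_le: "\<forall>\<theta>'\<in>\<Theta>. fstar \<le> f \<theta>'"
    and init: "\<theta> 0 \<in> \<Theta>"
    and maj: "\<forall>n\<ge>1. majorant f (g n)"
    and surr: "\<forall>n\<ge>1. strong_first_order_surrogate \<Theta> L L f (\<theta> (n - 1)) (g n)"
    and nu: "\<forall>n\<ge>1. is_arg_min (\<lambda>x. g n x - L / 2 * (norm (x - \<theta> (n - 1)))\<^sup>2) (\<lambda>x. x \<in> \<Theta>) (\<nu> n)"
    and alpha: "\<forall>n\<ge>1. is_arg_min (\<lambda>a. g n (a *\<^sub>R \<nu> n + (1 - a) *\<^sub>R \<theta> (n - 1)))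
                                    (\<lambda>a. a \<in> {0..1}) (\<alpha> n)"
    and step: "\<forall>n\<ge>1. \<theta> n = \<alpha> n *\<^sub>R \<nu> n + (1 - \<alpha> n) *\<^sub>R \<theta> (n - 1)"
  shows "(\<lambda>n. f (\<theta> n)) \<longlonglongrightarrow> fstar \<and>
         (\<forall>n\<ge>1. f (\<theta> n) - fstar \<le> 2 * L * (diameter \<Theta>)\<^sup>2 / (real n + 2))"
proof -
  obtain \<theta>s where \<theta>s: "\<theta>s \<in> \<Theta>" "f \<theta>s = fstar" using fmin by blast
  have \<theta>_in: "\<theta> n \<in> \<Theta>" for n
    using nu alpha step by (intro convex_iteration_mem[where x = \<theta>, OF cvx init]) (auto simp: is_arg_min_def)
  have L0: "L \<ge> 0"
    using surr[rule_format, of 1] lipschitz_on_nonneg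
    by (auto simp: strong_first_order_surrogate_def first_order_surrogate_def)
  have rate: "f (\<theta> n) - fstar \<le> 2 * (L * (diameter \<Theta>)\<^sup>2) / (real n + 2)" if "n \<ge> 1" for n
  proof (rule frank_wolfe_recurrence_bound[OF _ _ that])
    fix a :: real and k :: nat
    assume k: "k \<ge> 1" and a: "0 \<le> a" "a \<le> 1"
    have "f (\<alpha> k *\<^sub>R \<nu> k + (1 - \<alpha> k) *\<^sub>R \<theta> (k - 1)) - f \<theta>s
          \<le> (1 - a) * (f (\<theta> (k - 1)) - f \<theta>s) + L * (diameter \<Theta>)\<^sup>2 / 2 * a\<^sup>2"
      using surrogate_step_bound[OF bnd \<theta>_in \<theta>s(1) maj[rule_format, OF k] surr[rule_format, OF k]
          nu[rule_format, OF k] alpha[rule_format, OF k] a] .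
    then show "f (\<theta> k) - fstar \<le> (1 - a) * (f (\<theta> (k - 1)) - fstar) + L * (diameter \<Theta>)\<^sup>2 / 2 * a\<^sup>2"
      using step[rule_format, OF k] \<theta>s(2) by simp
  qed (use L0 in simp)
  have "(\<lambda>n. 2 * (L * (diameter \<Theta>)\<^sup>2) / (real n + 2)) \<longlonglongrightarrow> 0" by real_asymp
  then have "(\<lambda>n. f (\<theta> n) - fstar) \<longlonglongrightarrow> 0"
  proof (rule tendsto_sandwich[OF _ _ tendsto_const, rotated 2])
    show "\<forall>\<^sub>F n in sequentially. 0 \<le> f (\<theta> n) - fstar" using fmin_le \<theta>_in by simp
    show "\<forall>\<^sub>F n in sequentially. f (\<theta> n) - fstar \<le> 2 * (L * (diameter \<Theta>)\<^sup>2) / (real n + 2)"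
      using rate eventually_sequentially by blast
  qed
  then have "(\<lambda>n. f (\<theta> n)) \<longlonglongrightarrow> fstar"
    using tendsto_add_const_iff[of "- fstar" "\<lambda>n. f (\<theta> n)" fstar] by simp
  with rate show ?thesis by (simp add: mult.assoc)
qed

end
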